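(* Let $K$ be a field, $c\in K\setminus\{0\}$, $n\ge1$. For any $c$-frieze $f$ of order $n$ over $K$ there exists a $(-c)$-frieze $f'$ of order $n$ over $K$ such that for every integer $k$ with $-1\le k\le n+2$ and every $i\in\mathbb{Z}$: $f'(i,i+k-1)=f(i,i+k-1)$ if $k\equiv0\pmod 4$, or if $k\equiv1\pmod4$ and $i$ is even, or if $k\equiv3\pmod4$ and $i$ is odd; and $f'(i,i+k-1)=-f(i,i+k-1)$ if $k\equiv1\pmod4$ and $i$ is odd, or if $k\equiv2\pmod4$, or if $k\equiv3\pmod4$ and $i$ is even.
   Context: For a nonzero $a\in K$, the $a$-continuant polynomials $P_k^a$ ($k\ge -1$) are defined by $P_{-1}^a=0$, $P_0^a=1$ and, for $k\ge1$, $P_k^a(x_1,\dots,x_k)=x_kP_{k-1}^a(x_1,\dots,x_{k-1})+aP_{k-2}^a(x_1,\dots,x_{k-2})$. A family $(x_i)_{i\in\mathbb{Z}}$ in $K$ is $n$-admissible (for parameter $a$) if $P_{n+2}^a(x_i,\dots,x_{i+n+1})=0$ for all $i$. Let $\mathbb{B}_n=\{(i,j)\in\mathbb{Z}^2:-2\le j-i\le n+1\}$. An $a$-frieze of order $n$ is a function $f:\mathbb{B}_n\to K$ for which there is an $n$-admissible family $(x_i)$ (for parameter $a$) with $f(i,j)=P^a_{j-i+1}(x_i,\dots,x_j)$ for all $(i,j)\in\mathbb{B}_n$. *)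

theory Defs
  imports Main
begin

text \<open>cont a k x i = P^a_k(x_i, ..., x_{i+k-1}) for k >= 0.\<close>
fun cont :: "'a::field \<Rightarrow> nat \<Rightarrow> (int \<Rightarrow> 'a) \<Rightarrow> int \<Rightarrow> 'a" where
  "cont a 0 x i = 1"
| "cont a (Suc 0) x i = x i"
| "cont a (Suc (Suc k)) x i = x (i + int k + 1) * cont a (Suc k) x i + a * cont a k x i"

definition contI :: "'a::field \<Rightarrow> int \<Rightarrow> (int \<Rightarrow> 'a) \<Rightarrow> int \<Rightarrow> 'a" where
  "contI a k x i = (if k < 0 then 0 else cont a (nat k) x i)"

definition admissible :: "'a::field \<Rightarrow> nat \<Rightarrow> (int \<Rightarrow> 'a) \<Rightarrow> bool" where
  "admissible a n x \<longleftrightarrow> (\<forall>i. cont a (n + 2) x i = 0)"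

definition B :: "nat \<Rightarrow> (int \<times> int) set" where
  "B n = {(i, j). -2 \<le> j - i \<and> j - i \<le> int n + 1}"

text \<open>f is an a-frieze of order n: its values on B n are given by an admissible family.
  Values of f outside B n are irrelevant (f is only a function on B n).\<close>
definition is_frieze :: "'a::field \<Rightarrow> nat \<Rightarrow> (int \<Rightarrow> int \<Rightarrow> 'a) \<Rightarrow> bool" where
  "is_frieze a n f \<longleftrightarrow> (\<exists>x. admissible a n x \<and>
      (\<forall>(i, j)\<in>B n. f i j = contI a (j - i + 1) x i))"

end

theory Submission
  imports Defs
begin

text \<open>Replacing each \<open>x\<^sub>j\<close> by \<open>(-1)\<^sup>j x\<^sub>j\<close> turns \<open>c\<close>-continuants into \<open>(-c)\<close>-continuants
  up to a sign \<open>\<epsilon>\<^sub>k(i)\<close> depending only on \<open>k mod 4\<close> and the parity of \<open>i\<close>: it satisfies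
  \<open>\<epsilon>\<^sub>k\<^sub>+\<^sub>1(i) = (-1)\<^sup>i\<^sup>+\<^sup>k \<epsilon>\<^sub>k(i)\<close>, and two consecutive such factors multiply to \<open>-1\<close>, which
  absorbs the change \<open>c \<mapsto> -c\<close> in the three-term recurrence. Hence the new family is again
  admissible, and the frieze it defines is the required \<open>f'\<close>.\<close>

definition parity_sign :: "int \<Rightarrow> 'a::field" where
  "parity_sign j = (if even j then 1 else -1)"

definition frieze_sign :: "int \<Rightarrow> int \<Rightarrow> 'a::field" where
  "frieze_sign k i =
     (if k mod 4 = 0 then 1
      else if k mod 4 = 1 then parity_sign i
      else if k mod 4 = 2 then -1
      else - parity_sign i)"

lemma frieze_sign_add1:
  "frieze_sign (k + 1) i = parity_sign (i + k) * (frieze_sign k i :: 'a::field)"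
proof -
  consider "k mod 4 = 0" | "k mod 4 = 1" | "k mod 4 = 2" | "k mod 4 = 3" by linarith
  then show ?thesis
  proof cases
    case 1
    then have "(k + 1) mod 4 = 1" "even k" by presburger+
    then show ?thesis using 1 by (simp add: frieze_sign_def parity_sign_def)
  next
    case 2
    then have "(k + 1) mod 4 = 2" "odd k" by presburger+
    then show ?thesis using 2 by (simp add: frieze_sign_def parity_sign_def)
  next
    case 3
    then have "(k + 1) mod 4 = 3" "even k" by presburger+
    then show ?thesis using 3 by (simp add: frieze_sign_def parity_sign_def)
  next
    case 4
    then have "(k + 1) mod 4 = 0" "odd k" by presburger+
    then show ?thesis using 4 by (simp add: frieze_sign_def parity_sign_def)
  qed
qed

lemma frieze_sign_add2: "frieze_sign (k + 2) i = - (frieze_sign k i :: 'a::field)"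
proof -
  have "frieze_sign (k + 2) i = parity_sign (i + k + 1) * frieze_sign (k + 1) i"
    using frieze_sign_add1[of "k + 1" i] by (metis add.assoc one_add_one)
  also have "\<dots> = parity_sign (i + k + 1) * parity_sign (i + k) * (frieze_sign k i :: 'a)"
    by (simp add: frieze_sign_add1)
  finally show ?thesis by (simp add: parity_sign_def)
qed

lemma cont_alternating:
  "cont (- a) k (\<lambda>j. parity_sign j * x j) i = frieze_sign (int k) i * cont a k x i"
proof (induction a k x i rule: cont.induct)
  case (1 a x i)
  then show ?case by (simp add: frieze_sign_def)
next
  case (2 a x i)
  then show ?case by (simp add: frieze_sign_def)
next
  case (3 a k x i)
  define y where "y j = parity_sign j * x j" for j
  define \<epsilon> :: "nat \<Rightarrow> 'a" where "\<epsilon> m = frieze_sign (int m) i" for m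
  have "int (Suc (Suc k)) = (int k + 1) + 1" "int (Suc k) = int k + 1" by simp_all
  then have step: "\<epsilon> (Suc (Suc k)) = parity_sign (i + int k + 1) * \<epsilon> (Suc k)"
    and flip: "\<epsilon> (Suc (Suc k)) = - \<epsilon> k"
    using frieze_sign_add1[of "int k + 1" i] frieze_sign_add2[of "int k" i]
    unfolding \<epsilon>_def by (simp_all only: add.assoc one_add_one)
  have "cont (- a) (Suc (Suc k)) y i
      = parity_sign (i + int k + 1) * \<epsilon> (Suc k) * x (i + int k + 1) * cont a (Suc k) x i
        - a * \<epsilon> k * cont a k x i"
    using 3 unfolding y_def \<epsilon>_def by simp
  also have "\<dots> = \<epsilon> (Suc (Suc k)) * cont a (Suc (Suc k)) x i"
    unfolding step [symmetric] by (simp add: flip algebra_simps)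
  finally show ?case unfolding y_def \<epsilon>_def .
qed

lemma contI_alternating:
  "contI (- a) k (\<lambda>j. parity_sign j * x j) i = frieze_sign k i * contI a k x i"
  by (simp add: contI_def cont_alternating)

lemma admissible_alternating:
  assumes "admissible a n x"
  shows "admissible (- a) n (\<lambda>j. parity_sign j * x j)"
  using assms by (simp add: admissible_def cont_alternating del: cont.simps)

theorem mainTheorem2:
  fixes c :: "'a::field" and n :: nat and f :: "int \<Rightarrow> int \<Rightarrow> 'a"
  assumes "c \<noteq> 0" and "n \<ge> 1" and "is_frieze c n f"
  shows "\<exists>f'. is_frieze (- c) n f' \<and>
    (\<forall>k i. -1 \<le> k \<and> k \<le> int n + 2 \<longrightarrow>
       (((k mod 4 = 0 \<or> (k mod 4 = 1 \<and> even i) \<or> (k mod 4 = 3 \<and> odd i))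
          \<longrightarrow> f' i (i + k - 1) = f i (i + k - 1)) \<and>
       (((k mod 4 = 1 \<and> odd i) \<or> k mod 4 = 2 \<or> (k mod 4 = 3 \<and> even i))
          \<longrightarrow> f' i (i + k - 1) = - f i (i + k - 1))))"
proof -
  obtain x where adm: "admissible c n x"
    and fx: "\<forall>(i, j)\<in>B n. f i j = contI c (j - i + 1) x i"
    using assms(3) unfolding is_frieze_def by blast
  define f' where "f' i j = contI (- c) (j - i + 1) (\<lambda>j. parity_sign j * x j) i" for i j
  have "is_frieze (- c) n f'"
    unfolding is_frieze_def f'_def using admissible_alternating[OF adm] by blast
  moreover have "f' i (i + k - 1) = frieze_sign k i * f i (i + k - 1)"
    if "-1 \<le> k" "k \<le> int n + 2" for k i
  proof -
    have "(i, i + k - 1) \<in> B n" using that by (simp add: B_def)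
    then have "f i (i + k - 1) = contI c k x i" using fx by auto
    then show ?thesis by (simp add: f'_def contI_alternating)
  qed
  ultimately show ?thesis
    by (intro exI[of _ f']) (auto simp: frieze_sign_def parity_sign_def)
qed

end
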